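(* Let $\mu$ be a non-homogeneous Gibbs capacity and $\eta\in(0,1)$. With probability 1, for every $x\in[0,1]^d$, $$\liminf_{j\to\infty}\frac{\log_2\widetilde{\mathsf M}_\mu(I_{x_{|j}})}{-j}\ \ge\ H_\ell(\eta_\ell).$$
   Context: Fix $d\ge1$; $\Sigma_j$ is the set of words of length $j$ over $\{0,1\}^d$, $\Sigma^*=\bigcup_{j\ge1}\Sigma_j$, $\Sigma=(\{0,1\}^d)^{\mathbb N_+}$ with standard ultrametric and shift $\sigma$, $[w]$ the cylinder of $w$, $|w|$ the length, $wv$ concatenation; for $w\in\Sigma_j$, $I_w=\prod_{i=1}^d[x_w^{(i)},x_w^{(i)}+2^{-j}]$, $x_w^{(i)}=\sum_{k=1}^jw_k^{(i)}2^{-k}$. For $w\in\Sigma_j$, $\mathcal N_j(w)$ is the set of $u\in\Sigma_j$ such that $I_u$ equals or is a neighbour (shares a boundary point) of $I_w$. A point $x\in[0,1]^d$ is coded by the binary expansions of its coordinates (lexicographically largest for dyadic coordinates), $x_{|j}$ denoting the prefix of length $j$. A Gibbs capacity is $\mu(I_w)=K\nu([w])^\alpha e^{-\beta|w|}$ with $K>0$, $(\alpha,\beta)\in[0,\infty)^2\setminus\{(0,0)\}$, $\nu$ a Gibbs measure on $\Sigma$ for a Hölder potential $\psi$: $C^{-1}e^{\Psi([w])-|w|P(\sigma,\psi)}\le\nu([w])\le Ce^{\Psi([w])-|w|P(\sigma,\psi)}$, $\Psi([w])=\sup_{t\in[w]}\sum_{i<|w|}\psi(\sigma^it)$, $P$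 the pressure. Non-homogeneous: $\alpha>0$ and $\psi$ not cohomologous to a constant. $\tau_\mu(q)=\lim_j-\frac1j\log_2\sum_{w\in\Sigma_j}\mu(I_w)^q$ and $D_\mu=\tau_\mu^*$ (Legendre transform $\inf_q(qH-\tau_\mu(q))$); $H_\ell(\eta_\ell)=\min\{H\ge0:D_\mu(H)\ge d(1-\eta)\}$. Sampling: $(p_w)$ independent Bernoulli with $\mathbb P(p_w=1)=2^{-d(1-\eta)|w|}$; $\mathsf M_\mu(I_w)=\max\{\mu(I_{wv}):v\in\Sigma^*,p_{wv}=1\}$ and $\widetilde{\mathsf M}_\mu(I_w)=\max_{u\in\mathcal N_{|w|}(w)}\mathsf M_\mu(I_u)$. *)

theory Defs
  imports "HOL-Probability.Probability"
begin

text \<open>Letters of the alphabet {0,1}^d are functions 'd => bool, where d = CARD('d).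
  Words are lists of letters; infinite words (points of Sigma) are functions nat => letter
  (position 0 corresponds to the first letter).\<close>

type_synonym 'd letter = "'d \<Rightarrow> bool"
type_synonym 'd seq = "nat \<Rightarrow> 'd letter"

definition cyl :: "'d letter list \<Rightarrow> 'd seq set" where
  "cyl w = {t. \<forall>i<length w. t i = w ! i}"

definition shiftn :: "nat \<Rightarrow> 'd seq \<Rightarrow> 'd seq" where
  "shiftn i t = (\<lambda>n. t (n + i))"

definition shift :: "'d seq \<Rightarrow> 'd seq" where
  "shift t = (\<lambda>n. t (Suc n))"

definition seq_dist :: "'d seq \<Rightarrow> 'd seq \<Rightarrow> real" where
  "seq_dist s t = (if s = t then 0 else (1/2) ^ (LEAST n. s n \<noteq> t n))"

definition holder_potential :: "('d seq \<Rightarrow> real) \<Rightarrow> bool" where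
  "holder_potential \<psi> \<longleftrightarrow> (\<exists>C \<gamma>. \<gamma> > 0 \<and>
      (\<forall>s t. \<bar>\<psi> s - \<psi> t\<bar> \<le> C * seq_dist s t powr \<gamma>))"

definition seq_continuous :: "('d seq \<Rightarrow> real) \<Rightarrow> bool" where
  "seq_continuous u \<longleftrightarrow> (\<forall>s. \<forall>\<epsilon>>0. \<exists>\<delta>>0. \<forall>t. seq_dist s t < \<delta> \<longrightarrow> \<bar>u s - u t\<bar> < \<epsilon>)"

definition cohomologous_to_constant :: "('d seq \<Rightarrow> real) \<Rightarrow> bool" where
  "cohomologous_to_constant \<psi> \<longleftrightarrow>
     (\<exists>u c. seq_continuous u \<and> (\<forall>t. \<psi> t = u (shift t) - u t + c))"

definition Psi :: "('d seq \<Rightarrow> real) \<Rightarrow> 'd letter list \<Rightarrow> real" where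
  "Psi \<psi> w = (SUP t\<in>cyl w. \<Sum>i<length w. \<psi> (shiftn i t))"

definition pressure :: "('d::finite seq \<Rightarrow> real) \<Rightarrow> real" where
  "pressure \<psi> = lim (\<lambda>n. ln (\<Sum>w\<in>{w::'d letter list. length w = n}. exp (Psi \<psi> w)) / real n)"

text \<open>Borel sigma-algebra of Sigma (= product sigma-algebra of discrete factors).\<close>
definition seq_space :: "'d seq measure" where
  "seq_space = PiM UNIV (\<lambda>_. count_space UNIV)"

definition gibbs_measure :: "('d::finite seq \<Rightarrow> real) \<Rightarrow> 'd seq measure \<Rightarrow> bool" where
  "gibbs_measure \<psi> \<nu> \<longleftrightarrow> prob_space \<nu> \<and> sets \<nu> = sets seq_space \<and>
     (\<exists>C>0. \<forall>w::'d letter list. length w \<ge> 1 \<longrightarrow>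
        inverse C * exp (Psi \<psi> w - real (length w) * pressure \<psi>) \<le> measure \<nu> (cyl w) \<and>
        measure \<nu> (cyl w) \<le> C * exp (Psi \<psi> w - real (length w) * pressure \<psi>))"

text \<open>Gibbs capacity: mu(I_w) = K nu([w])^alpha e^(-beta |w|).\<close>
definition gcap :: "real \<Rightarrow> real \<Rightarrow> real \<Rightarrow> 'd seq measure \<Rightarrow> 'd letter list \<Rightarrow> real" where
  "gcap K \<alpha> \<beta> \<nu> w = K * measure \<nu> (cyl w) powr \<alpha> * exp (- \<beta> * real (length w))"

definition tau :: "real \<Rightarrow> real \<Rightarrow> real \<Rightarrow> 'd::finite seq measure \<Rightarrow> real \<Rightarrow> real" where
  "tau K \<alpha> \<beta> \<nu> q = lim (\<lambda>j. - log 2 (\<Sum>w\<in>{w::'d letter list. length w = j}. gcap K \<alpha> \<beta> \<nu> w powr q) / real j)"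

definition Dspec :: "real \<Rightarrow> real \<Rightarrow> real \<Rightarrow> 'd::finite seq measure \<Rightarrow> real \<Rightarrow> ereal" where
  "Dspec K \<alpha> \<beta> \<nu> H = (INF q. ereal (q * H - tau K \<alpha> \<beta> \<nu> q))"

definition H_l :: "real \<Rightarrow> real \<Rightarrow> real \<Rightarrow> 'd::finite seq measure \<Rightarrow> real \<Rightarrow> real" where
  "H_l K \<alpha> \<beta> \<nu> \<eta> = Inf {H. H \<ge> 0 \<and> Dspec K \<alpha> \<beta> \<nu> H \<ge> ereal (real CARD('d) * (1 - \<eta>))}"

definition corner :: "'d letter list \<Rightarrow> 'd \<Rightarrow> real" where
  "corner w i = (\<Sum>k<length w. (if (w ! k) i then 1 else 0) / 2 ^ (k + 1))"

definition cube :: "'d letter list \<Rightarrow> (real ^ 'd) set" where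
  "cube w = {y. \<forall>i. corner w i \<le> y $ i \<and> y $ i \<le> corner w i + 1 / 2 ^ length w}"

definition nbrs :: "'d::finite letter list \<Rightarrow> 'd letter list set" where
  "nbrs w = {u. length u = length w \<and> (u = w \<or> frontier (cube u) \<inter> frontier (cube w) \<noteq> {})}"

text \<open>k-th binary digit (k >= 1) of t in [0,1], lexicographically largest expansion.\<close>
definition bdigit :: "real \<Rightarrow> nat \<Rightarrow> bool" where
  "bdigit t k = (if t = 1 then True else odd \<lfloor>2 ^ k * t\<rfloor>)"

definition xprefix :: "real ^ 'd \<Rightarrow> nat \<Rightarrow> 'd letter list" where
  "xprefix x j = map (\<lambda>k. \<lambda>i. bdigit (x $ i) (k + 1)) [0..<j]"

definition sampling :: "'a measure \<Rightarrow> real \<Rightarrow> ('d::finite letter list \<Rightarrow> 'a \<Rightarrow> bool) \<Rightarrow> bool" where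
  "sampling \<Omega> \<eta> p \<longleftrightarrow> prob_space \<Omega> \<and>
     prob_space.indep_vars \<Omega> (\<lambda>_. count_space UNIV) p {w. w \<noteq> []} \<and>
     (\<forall>w. w \<noteq> [] \<longrightarrow> measure \<Omega> {\<omega>\<in>space \<Omega>. p w \<omega>} = 2 powr (- real CARD('d) * (1 - \<eta>) * real (length w)))"

definition Msamp :: "real \<Rightarrow> real \<Rightarrow> real \<Rightarrow> 'd seq measure \<Rightarrow> ('d letter list \<Rightarrow> 'a \<Rightarrow> bool)
     \<Rightarrow> 'a \<Rightarrow> 'd letter list \<Rightarrow> real" where
  "Msamp K \<alpha> \<beta> \<nu> p \<omega> w = Sup {gcap K \<alpha> \<beta> \<nu> (w @ v) | v. v \<noteq> [] \<and> p (w @ v) \<omega>}"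

definition Mtilde :: "real \<Rightarrow> real \<Rightarrow> real \<Rightarrow> 'd::finite seq measure \<Rightarrow> ('d letter list \<Rightarrow> 'a \<Rightarrow> bool)
     \<Rightarrow> 'a \<Rightarrow> 'd letter list \<Rightarrow> real" where
  "Mtilde K \<alpha> \<beta> \<nu> p \<omega> w = Max ((\<lambda>u. Msamp K \<alpha> \<beta> \<nu> p \<omega> u) ` nbrs w)"

end

theory Submission
  imports Defs "HOL-Library.Cardinality"
begin

text \<open>A Gibbs capacity is quasi-multiplicative on words (bounded distortion of the Hoelder
  potential), hence so are the partition sums \<open>S\<^sub>n(q) = \<Sum>{\<mu>(I_w)^q : |w| = n}\<close>; by Fekete's
  lemma \<open>-log\<^sub>2 S\<^sub>n(q) / n\<close> converges to \<open>\<tau>(q)\<close>, and Hoelder's inequality makes \<open>\<tau>\<close> concave. As \<open>\<tau>\<close>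
  is also nondecreasing with \<open>\<tau>(0) = -d\<close>, every \<open>H < H_l(\<eta>)\<close> admits some \<open>q \<ge> 0\<close> with
  \<open>q H - \<tau>(q) < d (1 - \<eta>)\<close>. By Markov's inequality at most \<open>2^(n q H) S\<^sub>n(q)\<close> words of
  generation \<open>n\<close> have \<open>\<mu>(I_w) > 2^(-n H)\<close>, and each is sampled with probability
  \<open>2^(-d (1 - \<eta>) n)\<close>; the product decays exponentially, so by Borel--Cantelli almost surely every
  long sampled word satisfies \<open>\<mu>(I_w) \<le> 2^(-|w| H)\<close>. Almost surely every word also has a sampled
  extension, so for long words \<open>w\<close> the maximum of \<open>\<mu>\<close> over sampled extensions of \<open>w\<close> and of its
  neighbours is at most \<open>2^(-|w| H)\<close>.\<close>

lemma quasi_additive_iterate: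
  fixes a :: "nat \<Rightarrow> real"
  assumes qa: "\<And>m n. 1 \<le> m \<Longrightarrow> 1 \<le> n \<Longrightarrow> \<bar>a (m + n) - a m - a n\<bar> \<le> c"
    and "1 \<le> m" "1 \<le> r"
  shows "\<bar>a (k * m + r) - real k * a m - a r\<bar> \<le> real k * c"
proof (induction k)
  case (Suc k)
  have "\<bar>a (m + (k * m + r)) - a m - a (k * m + r)\<bar> \<le> c"
    using qa assms(2,3) by simp
  with Suc show ?case by (simp add: add.assoc algebra_simps abs_le_iff)
qed simp

lemma quasi_additive_quotient_close:
  fixes a :: "nat \<Rightarrow> real"
  assumes qa: "\<And>m n. 1 \<le> m \<Longrightarrow> 1 \<le> n \<Longrightarrow> \<bar>a (m + n) - a m - a n\<bar> \<le> c"
    and m: "1 \<le> m" and n: "1 \<le> n"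
  shows "\<bar>a n / n - a m / m\<bar> \<le> c / m + (\<bar>a m\<bar> + (\<Sum>r\<le>m. \<bar>a r\<bar>)) / n"
proof -
  define k where "k = (n - 1) div m"
  define r where "r = (n - 1) mod m + 1"
  have "(n - 1) mod m < m" using m by simp
  then have nk: "n = k * m + r" and r: "1 \<le> r" "r \<le> m"
    using n by (auto simp: k_def r_def)
  have c: "0 \<le> c" using qa[of 1 1] by linarith
  have dev: "\<bar>a n - k * a m - a r\<bar> \<le> k * c"
    using quasi_additive_iterate[OF qa m r(1), of k] nk by simp
  have "real r = real n - real k * real m" using nk by simp
  then have "a n / n - a m / m = ((a n - k * a m - a r) + a r - a m * (r / m)) / n"
    unfolding \<open>real r = _\<close> using m n by (simp add: field_simps)
  moreover have "\<bar>a m * (r / m)\<bar> \<le> \<bar>a m\<bar>"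
  proof -
    have "\<bar>a m\<bar> * (r / m) \<le> \<bar>a m\<bar>" using r by (intro mult_left_le) auto
    then show ?thesis by (simp add: abs_mult)
  qed
  moreover have "\<bar>a r\<bar> \<le> (\<Sum>r\<le>m. \<bar>a r\<bar>)"
    using r by (intro member_le_sum) auto
  ultimately have "\<bar>a n / n - a m / m\<bar> \<le> (k * c + (\<bar>a m\<bar> + (\<Sum>r\<le>m. \<bar>a r\<bar>))) / n"
    using dev n by (simp only: abs_divide abs_of_nat) (intro divide_right_mono; arith)
  also have "\<dots> = k * c / n + (\<bar>a m\<bar> + (\<Sum>r\<le>m. \<bar>a r\<bar>)) / n"
    by (rule add_divide_distrib)
  also have "k * c / n \<le> c / m"
  proof -
    have "c * (k * m) \<le> c * n" using nk c by (intro mult_left_mono) auto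
    then show ?thesis using m n by (simp add: field_simps)
  qed
  finally show ?thesis by simp
qed

lemma quasi_additive_convergent:
  fixes a :: "nat \<Rightarrow> real"
  assumes qa: "\<And>m n. 1 \<le> m \<Longrightarrow> 1 \<le> n \<Longrightarrow> \<bar>a (m + n) - a m - a n\<bar> \<le> c"
  shows "convergent (\<lambda>n. a n / n)"
proof (rule Cauchy_convergent, rule CauchyI)
  fix e :: real assume e: "0 < e"
  have c: "0 \<le> c" using qa[of 1 1] by linarith
  obtain m0 N0 :: nat where "4 * c / e < m0" "4 * (\<bar>a (Suc m0)\<bar> + (\<Sum>r\<le>Suc m0. \<bar>a r\<bar>)) / e < N0"
    using reals_Archimedean2 by metis
  then obtain m N :: nat where m: "1 \<le> m" "4 * c / e < m"
    and N: "1 \<le> N" "4 * (\<bar>a m\<bar> + (\<Sum>r\<le>m. \<bar>a r\<bar>)) / e < N"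
    by (intro that[of "Suc m0" "Suc N0"]) auto
  define B where "B = \<bar>a m\<bar> + (\<Sum>r\<le>m. \<bar>a r\<bar>)"
  have close: "\<bar>a i / i - a m / m\<bar> < e / 2" if "N \<le> i" for i
  proof -
    have "c / m < e / 4" using m e by (simp add: field_simps)
    moreover have "B / i < e / 4"
    proof -
      have "B / i \<le> B / N"
        using N that by (intro divide_left_mono) (auto simp: B_def sum_nonneg)
      also have "B / N < e / 4" using N e by (simp add: B_def field_simps)
      finally show ?thesis .
    qed
    moreover have "\<bar>a i / i - a m / m\<bar> \<le> c / m + B / i"
      using quasi_additive_quotient_close[OF qa m(1), of i] N that by (simp add: B_def)
    ultimately show ?thesis by linarith
  qed
  show "\<exists>M. \<forall>i\<ge>M. \<forall>j\<ge>M. norm (a i / i - a j / j) < e"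
  proof (intro exI[of _ N] allI impI)
    fix i j assume "N \<le> i" "N \<le> j"
    with close[of i] close[of j] show "norm (a i / i - a j / j) < e"
      unfolding real_norm_def by linarith
  qed
qed

lemma sum_powr_log_convex:
  fixes f :: "'a \<Rightarrow> real"
  assumes fin: "finite A" and ne: "A \<noteq> {}" and pos: "\<And>x. x \<in> A \<Longrightarrow> 0 < f x"
    and l: "0 \<le> l" "l \<le> 1"
  shows "(\<Sum>x\<in>A. f x powr (l * p + (1 - l) * r))
    \<le> (\<Sum>x\<in>A. f x powr p) powr l * (\<Sum>x\<in>A. f x powr r) powr (1 - l)"
proof -
  define X where "X = (\<Sum>x\<in>A. f x powr p)"
  define Y where "Y = (\<Sum>x\<in>A. f x powr r)"
  have "0 < f x powr s" if "x \<in> A" for x s using pos[OF that] by simp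
  then have X: "0 < X" and Y: "0 < Y"
    unfolding X_def Y_def using fin ne by (auto intro!: sum_pos)
  define c where "c = X powr l * Y powr (1 - l)"
  have young: "f x powr (l * p + (1 - l) * r) \<le> c * (l * (f x powr p / X) + (1 - l) * (f x powr r / Y))"
    if x: "x \<in> A" for x
  proof -
    have "f x powr (l * p + (1 - l) * r) = c * ((f x powr p / X) powr l * (f x powr r / Y) powr (1 - l))"
      using X Y pos[OF x] by (simp add: c_def powr_divide powr_add powr_powr mult.commute)
    also have "\<dots> \<le> c * (l * (f x powr p / X) + (1 - l) * (f x powr r / Y))"
      using l X Y pos[OF x] by (intro mult_left_mono Youngs_inequality_0) (auto simp: c_def)
    finally show ?thesis .
  qed
  have "(\<Sum>x\<in>A. f x powr (l * p + (1 - l) * r))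
      \<le> (\<Sum>x\<in>A. c * (l * (f x powr p / X) + (1 - l) * (f x powr r / Y)))"
    by (rule sum_mono) (rule young)
  also have "\<dots> = c * (l * ((\<Sum>x\<in>A. f x powr p) / X) + (1 - l) * ((\<Sum>x\<in>A. f x powr r) / Y))"
    by (simp only: sum_distrib_left[symmetric] sum.distrib sum_divide_distrib[symmetric])
  also have "\<dots> = c" using X Y by (simp add: X_def[symmetric] Y_def[symmetric])
  finally show ?thesis by (simp add: c_def X_def Y_def)
qed

lemma concave_on_LIMSEQ:
  fixes f :: "nat \<Rightarrow> real \<Rightarrow> real"
  assumes "\<forall>\<^sub>F n in sequentially. concave_on UNIV (f n)"
    and "\<And>x. (\<lambda>n. f n x) \<longlonglongrightarrow> g x"
  shows "concave_on UNIV g"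
  unfolding concave_on_iff
proof (intro conjI convex_UNIV ballI allI impI)
  fix x y u v :: real assume uv: "0 \<le> u" "0 \<le> v" "u + v = 1"
  show "u * g x + v * g y \<le> g (u *\<^sub>R x + v *\<^sub>R y)"
  proof (rule tendsto_le[OF trivial_limit_sequentially assms(2)])
    show "(\<lambda>n. u * f n x + v * f n y) \<longlonglongrightarrow> u * g x + v * g y"
      by (intro tendsto_intros assms(2))
    show "\<forall>\<^sub>F n in sequentially. u * f n x + v * f n y \<le> f n (u *\<^sub>R x + v *\<^sub>R y)"
      using assms(1) by eventually_elim (use uv in \<open>auto simp: concave_on_iff\<close>)
  qed
qed

text \<open>Every chord slope of a concave function to the right of \<open>0\<close> is bounded by every chord slope
  to the left of \<open>0\<close>; their separating value is the supergradient.\<close>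

lemma concave_mono_supergradient:
  fixes f :: "real \<Rightarrow> real"
  assumes conc: "concave_on UNIV f" and mono: "mono f"
  obtains H where "0 \<le> H" "\<And>q. f q \<le> f 0 + H * q"
proof -
  have convex: "convex_on UNIV (\<lambda>x. - f x)"
    using conc by (simp add: concave_on_def)
  have slope: "(f p - f 0) / p \<le> (f q - f 0) / q" if "q < 0" "0 < p" for p q
  proof -
    have "(- f q - - f 0) / (q - 0) \<le> (- f 0 - - f p) / (0 - p)"
      using convex_on_slope_le[OF convex, of q p 0] that by simp
    moreover have "(- f q - - f 0) / (q - 0) = - ((f q - f 0) / q)"
      "(- f 0 - - f p) / (0 - p) = - ((f p - f 0) / p)"
      using that by (simp_all add: field_simps)
    ultimately show ?thesis by linarith
  qed
  define H where "H = (SUP p\<in>{0<..}. (f p - f 0) / p)"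
  have bdd: "bdd_above ((\<lambda>p. (f p - f 0) / p) ` {0<..})"
    using slope[of "-1"] by (intro bdd_aboveI2[of _ _ "(f (-1) - f 0) / (-1)"]) auto
  have right: "(f p - f 0) / p \<le> H" if "0 < p" for p
    unfolding H_def using that by (intro cSUP_upper[OF _ bdd]) auto
  have left: "H \<le> (f q - f 0) / q" if "q < 0" for q
    unfolding H_def using slope that by (intro cSUP_least) auto
  have "0 \<le> H" using right[of 1] mono[THEN monoD, of 0 1] by simp
  moreover have "f q \<le> f 0 + H * q" for q
  proof (cases q "0::real" rule: linorder_cases)
    case less then show ?thesis using left[OF less] by (simp add: neg_le_divide_eq mult.commute)
  next
    case greater then show ?thesis using right[OF greater] by (simp add: pos_divide_le_eq mult.commute)
  qed simp
  ultimately show thesis by (rule that)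
qed

lemma one_minus_power_le_inverse:
  fixes x :: real
  assumes "0 < x" "x \<le> 1" "0 < M"
  shows "(1 - x) ^ M \<le> 1 / (x * M)"
proof -
  have "(1 - x) ^ M \<le> exp (- x) ^ M"
    using assms exp_ge_add_one_self[of "- x"] by (intro power_mono) auto
  also have "\<dots> = 1 / exp (x * M)"
    by (simp add: exp_of_nat_mult[symmetric] exp_minus field_simps)
  also have "\<dots> \<le> 1 / (x * M)"
  proof -
    have "x * M \<le> exp (x * M)" using exp_ge_add_one_self[of "x * M"] by linarith
    then show ?thesis using assms by (intro divide_left_mono) auto
  qed
  finally show ?thesis .
qed

lemma eventually_le_powr_neg_mult:
  fixes H c :: real
  assumes "H < 0"
  shows "\<forall>\<^sub>F j in sequentially. c \<le> 2 powr (- H * j)"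
  using eventually_ge_at_top[of "nat \<lceil>log 2 (max c 1) / - H\<rceil>"]
proof eventually_elim
  case (elim j)
  have "0 < - H" using assms by simp
  moreover have "log 2 (max c 1) / - H \<le> j"
    using elim real_nat_ceiling_ge[of "log 2 (max c 1) / - H"] by linarith
  ultimately have "log 2 (max c 1) \<le> - H * j"
    by (simp only: pos_divide_le_eq mult.commute)
  then have "2 powr log 2 (max c 1) \<le> 2 powr (- H * j)" by (intro powr_mono) auto
  then show ?case by simp
qed

lemma le_two_powr_of_less_log_div:
  fixes S a :: real and n :: nat
  assumes "0 < S" "0 < n" "a < - log 2 S / n"
  shows "S \<le> 2 powr (- n * a)"
proof -
  have "a * n < - log 2 S"
    using assms(2,3) pos_less_divide_eq[of "real n" a "- log 2 S"] by simp
  then have "2 powr log 2 S \<le> 2 powr (- n * a)" by (intro powr_mono) (simp_all add: algebra_simps)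
  with assms(1) show ?thesis by simp
qed

lemma card_superlevel_le_sum_powr:
  fixes g :: "'a \<Rightarrow> real"
  assumes "finite A" "0 \<le> q" "0 < t" "\<And>u. u \<in> A \<Longrightarrow> 0 \<le> g u"
  shows "card {u\<in>A. t < g u} \<le> t powr (- q) * (\<Sum>u\<in>A. g u powr q)"
proof -
  have "card {u\<in>A. t < g u} = (\<Sum>u\<in>{u\<in>A. t < g u}. 1::real)" by simp
  also have "\<dots> \<le> (\<Sum>u\<in>{u\<in>A. t < g u}. t powr (- q) * g u powr q)"
  proof (rule sum_mono)
    fix u assume "u \<in> {u\<in>A. t < g u}"
    then have "1 \<le> (g u / t) powr q" using assms by (intro ge_one_powr_ge_zero) auto
    also have "(g u / t) powr q = t powr (- q) * g u powr q"
      using assms \<open>u \<in> _\<close> by (simp add: powr_divide powr_minus_divide)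
    finally show "1 \<le> t powr (- q) * g u powr q" .
  qed
  also have "\<dots> \<le> (\<Sum>u\<in>A. t powr (- q) * g u powr q)"
    using assms by (intro sum_mono2) auto
  finally show ?thesis by (simp add: sum_distrib_left)
qed

lemma ereal_le_liminf_of_eventually:
  fixes f :: "nat \<Rightarrow> real"
  assumes "\<And>k::nat. \<forall>\<^sub>F j in sequentially. c - 1 / Suc k \<le> f j"
  shows "ereal c \<le> liminf (\<lambda>j. ereal (f j))"
  unfolding le_Liminf_iff
proof (intro allI impI)
  fix y assume y: "y < ereal c"
  obtain k :: nat where "y < ereal (c - 1 / Suc k)"
  proof (cases y)
    case (real r)
    then obtain k where "inverse (real (Suc k)) < c - r"
      using y reals_Archimedean[of "c - r"] by auto
    with real show thesis by (intro that[of k]) (simp add: inverse_eq_divide)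
  qed (use y in auto)
  with assms[of k] show "\<forall>\<^sub>F j in sequentially. y < ereal (f j)"
    by (auto elim!: eventually_mono intro: order.strict_trans2)
qed

abbreviation words :: "nat \<Rightarrow> 'a list set" where
  "words n \<equiv> {w. length w = n}"

lemma finite_words: "finite (words n :: 'a::finite list set)"
  using finite_lists_length_eq[of "UNIV :: 'a set" n] by simp

lemma words_nonempty: "words n \<noteq> {}"
proof -
  have "replicate n undefined \<in> words n" by simp
  then show ?thesis by blast
qed

lemma sum_words_powr_pos:
  fixes g :: "'a::finite list \<Rightarrow> real"
  assumes "\<And>u. u \<noteq> [] \<Longrightarrow> 0 < g u" "1 \<le> n"
  shows "0 < (\<Sum>u\<in>words n. g u powr q)"
proof (rule sum_pos[OF finite_words words_nonempty])
  fix u :: "'a list" assume "u \<in> words n"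
  with assms(2) have "u \<noteq> []" by auto
  with assms(1) have "0 < g u" by blast
  then show "0 < g u powr q" by simp
qed

lemma card_words: "card (words n :: 'd::finite letter list set) = (2 ^ CARD('d)) ^ n"
proof -
  have "card (words n :: 'd letter list set) = CARD('d letter) ^ n"
    using card_lists_length_eq[of "UNIV :: 'd letter set" n] by simp
  then show ?thesis by (simp add: card_fun)
qed

lemma sum_words_add:
  fixes f :: "'a::finite list \<Rightarrow> 'b::comm_monoid_add"
  shows "(\<Sum>w\<in>words (m + n). f w) = (\<Sum>u\<in>words m. \<Sum>v\<in>words n. f (u @ v))"
proof -
  have "bij_betw (\<lambda>(u, v). u @ v) (words m \<times> words n) (words (m + n) :: 'a list set)"
    by (rule bij_betwI[where g = "\<lambda>w. (take m w, drop m w)"]) auto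
  then have "(\<Sum>w\<in>words (m + n). f w) = (\<Sum>(u, v)\<in>words m \<times> words n. f (u @ v))"
    by (simp add: sum.reindex_bij_betw[symmetric] case_prod_unfold)
  then show ?thesis by (simp add: sum.cartesian_product)
qed

lemma cyl_nonempty: "cyl w \<noteq> {}"
proof -
  have "(\<lambda>i. if i < length w then w ! i else undefined) \<in> cyl w" by (simp add: cyl_def)
  then show ?thesis by blast
qed

lemma cyl_append: "t \<in> cyl (u @ v) \<longleftrightarrow> t \<in> cyl u \<and> shiftn (length u) t \<in> cyl v"
proof -
  have "t \<in> cyl (u @ v) \<longleftrightarrow> (\<forall>i<length u. t i = u ! i) \<and> (\<forall>i<length v. t (length u + i) = v ! i)"
    unfolding cyl_def by (auto simp: nth_append) (metis add_diff_inverse_nat nat_add_left_cancel_less)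
  then show ?thesis by (simp add: cyl_def shiftn_def add.commute)
qed

definition birkhoff_sum :: "('d seq \<Rightarrow> real) \<Rightarrow> nat \<Rightarrow> 'd seq \<Rightarrow> real" where
  "birkhoff_sum \<psi> n t = (\<Sum>i<n. \<psi> (shiftn i t))"

lemma birkhoff_sum_add:
  "birkhoff_sum \<psi> (m + n) t = birkhoff_sum \<psi> m t + birkhoff_sum \<psi> n (shiftn m t)"
proof (induction n)
  case (Suc n)
  have "shiftn n (shiftn m t) = shiftn (m + n) t"
    by (simp add: shiftn_def add.commute add.left_commute)
  with Suc show ?case by (simp add: birkhoff_sum_def)
qed (simp add: birkhoff_sum_def)

lemma seq_dist_le_if_agree:
  assumes "\<forall>k<n. s k = t k"
  shows "seq_dist s t \<le> (1/2) ^ n"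
proof (cases "s = t")
  case False
  then obtain k where "s k \<noteq> t k" by auto
  then have "s (LEAST k. s k \<noteq> t k) \<noteq> t (LEAST k. s k \<noteq> t k)" by (rule LeastI)
  with assms have "n \<le> (LEAST k. s k \<noteq> t k)" using not_le by blast
  with False show ?thesis by (simp add: seq_dist_def power_decreasing)
qed (simp add: seq_dist_def)

lemma holder_potentialE:
  assumes "holder_potential \<psi>"
  obtains C \<gamma> where "0 \<le> C" "0 < \<gamma>" "\<And>s t. \<bar>\<psi> s - \<psi> t\<bar> \<le> C * seq_dist s t powr \<gamma>"
proof -
  obtain C \<gamma> where "0 < \<gamma>" and C: "\<And>s t. \<bar>\<psi> s - \<psi> t\<bar> \<le> C * seq_dist s t powr \<gamma>"
    using assms unfolding holder_potential_def by blast
  have "\<bar>\<psi> s - \<psi> t\<bar> \<le> max C 0 * seq_dist s t powr \<gamma>" for s t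
    using C[of s t] mult_right_mono[of C "max C 0" "seq_dist s t powr \<gamma>"] by simp
  with \<open>0 < \<gamma>\<close> show thesis by (intro that[of "max C 0" \<gamma>]) auto
qed

lemma holder_shiftn_le:
  assumes hol: "\<And>s t. \<bar>\<psi> s - \<psi> t\<bar> \<le> C * seq_dist s t powr \<gamma>" and "0 \<le> C" "0 < \<gamma>"
    and "s \<in> cyl w" "t \<in> cyl w" "i < length w"
  shows "\<bar>\<psi> (shiftn i s) - \<psi> (shiftn i t)\<bar> \<le> C * ((1/2) powr \<gamma>) ^ (length w - i)"
proof -
  have "\<forall>k<length w - i. shiftn i s k = shiftn i t k"
    using assms(4-6) by (auto simp: cyl_def shiftn_def)
  then have "seq_dist (shiftn i s) (shiftn i t) powr \<gamma> \<le> ((1/2) ^ (length w - i)) powr \<gamma>"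
    using assms(3) by (intro powr_mono2 seq_dist_le_if_agree) (auto simp: seq_dist_def)
  also have "\<dots> = ((1/2) powr \<gamma>) ^ (length w - i)"
    by (simp add: powr_realpow[symmetric] powr_powr mult.commute)
  finally have "C * seq_dist (shiftn i s) (shiftn i t) powr \<gamma> \<le> C * ((1/2) powr \<gamma>) ^ (length w - i)"
    using assms(2) by (rule mult_left_mono)
  then show ?thesis using hol[of "shiftn i s" "shiftn i t"] by linarith
qed

text \<open>Bounded distortion: the contributions of the last letters to the Birkhoff sums along a
  cylinder are geometrically small.\<close>

lemma holder_bounded_distortion:
  assumes "holder_potential \<psi>"
  obtains D where "\<And>w s t. s \<in> cyl w \<Longrightarrow> t \<in> cyl w \<Longrightarrow>
    \<bar>birkhoff_sum \<psi> (length w) s - birkhoff_sum \<psi> (length w) t\<bar> \<le> D"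
proof -
  obtain C \<gamma> where C: "0 \<le> C" and \<gamma>: "0 < \<gamma>"
    and hol: "\<And>s t. \<bar>\<psi> s - \<psi> t\<bar> \<le> C * seq_dist s t powr \<gamma>"
    using assms holder_potentialE by blast
  define \<rho> :: real where "\<rho> = (1/2) powr \<gamma>"
  have "(1/2::real) powr \<gamma> < 1 powr \<gamma>"
    using \<gamma> by (intro powr_less_mono2) auto
  then have \<rho>: "0 < \<rho>" "\<rho> < 1" by (simp_all add: \<rho>_def)
  have "\<bar>birkhoff_sum \<psi> (length w) s - birkhoff_sum \<psi> (length w) t\<bar> \<le> C / (1 - \<rho>)"
    if s: "s \<in> cyl w" and t: "t \<in> cyl w" for w s t
  proof -
    define n where "n = length w"
    have "\<bar>birkhoff_sum \<psi> n s - birkhoff_sum \<psi> n t\<bar> \<le> (\<Sum>i<n. C * \<rho> ^ (n - i))"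
      unfolding birkhoff_sum_def sum_subtractf[symmetric] \<rho>_def n_def
      by (rule order_trans[OF sum_abs sum_mono]) (simp add: holder_shiftn_le[OF hol C \<gamma> s t])
    also have "\<dots> = (\<Sum>i<n. C * \<rho> ^ Suc (n - Suc i))"
      by (rule sum.cong) (auto simp: Suc_diff_Suc)
    also have "\<dots> = C * (\<Sum>i<n. \<rho> ^ Suc i)"
      using sum.nat_diff_reindex[where g = "\<lambda>i. C * \<rho> ^ Suc i" and n = n]
      by (simp add: sum_distrib_left)
    also have "(\<Sum>i<n. \<rho> ^ Suc i) \<le> (\<Sum>i. \<rho> ^ i)"
    proof (rule order_trans[OF sum_mono sum_le_suminf])
      show "\<rho> ^ Suc i \<le> \<rho> ^ i" for i using \<rho> by (simp add: power_le_imp_le_exp)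
    qed (use \<rho> in \<open>auto intro: summable_geometric\<close>)
    also have "(\<Sum>i. \<rho> ^ i) = 1 / (1 - \<rho>)"
      using \<rho> by (simp add: suminf_geometric)
    finally show ?thesis using C by (simp add: mult_left_mono n_def)
  qed
  then show thesis by (rule that)
qed

context
  fixes \<psi> :: "'d seq \<Rightarrow> real" and D :: real
  assumes distortion: "\<And>w s t. s \<in> cyl w \<Longrightarrow> t \<in> cyl w \<Longrightarrow>
    \<bar>birkhoff_sum \<psi> (length w) s - birkhoff_sum \<psi> (length w) t\<bar> \<le> D"
begin

lemma Psi_eq_SUP: "Psi \<psi> w = (SUP s\<in>cyl w. birkhoff_sum \<psi> (length w) s)"
  by (simp add: Psi_def birkhoff_sum_def)

lemma birkhoff_sum_le_Psi:
  assumes "t \<in> cyl w"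
  shows "birkhoff_sum \<psi> (length w) t \<le> Psi \<psi> w"
proof -
  have "bdd_above ((\<lambda>s. birkhoff_sum \<psi> (length w) s) ` cyl w)"
    using distortion[OF _ assms] by (intro bdd_aboveI[of _ "birkhoff_sum \<psi> (length w) t + D"])
      (fastforce simp: abs_le_iff)
  with assms show ?thesis unfolding Psi_eq_SUP by (rule cSUP_upper)
qed

lemma Psi_le_birkhoff_sum:
  assumes "t \<in> cyl w"
  shows "Psi \<psi> w \<le> birkhoff_sum \<psi> (length w) t + D"
  unfolding Psi_eq_SUP
proof (rule cSUP_least[OF cyl_nonempty])
  fix s assume "s \<in> cyl w"
  from distortion[OF this assms] show "birkhoff_sum \<psi> (length w) s \<le> birkhoff_sum \<psi> (length w) t + D"
    by (simp add: abs_le_iff)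
qed

lemma Psi_append_le: "Psi \<psi> (u @ v) \<le> Psi \<psi> u + Psi \<psi> v"
  unfolding Psi_eq_SUP[of "u @ v"]
proof (rule cSUP_least[OF cyl_nonempty])
  fix t assume "t \<in> cyl (u @ v)"
  then show "birkhoff_sum \<psi> (length (u @ v)) t \<le> Psi \<psi> u + Psi \<psi> v"
    using birkhoff_sum_le_Psi by (simp add: cyl_append birkhoff_sum_add add_mono)
qed

lemma Psi_append_ge: "Psi \<psi> u + Psi \<psi> v \<le> Psi \<psi> (u @ v) + 2 * D"
proof -
  obtain t where t: "t \<in> cyl (u @ v)" using cyl_nonempty by blast
  then have "t \<in> cyl u" "shiftn (length u) t \<in> cyl v" by (simp_all add: cyl_append)
  then have "Psi \<psi> u \<le> birkhoff_sum \<psi> (length u) t + D"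
    "Psi \<psi> v \<le> birkhoff_sum \<psi> (length v) (shiftn (length u) t) + D"
    by (simp_all add: Psi_le_birkhoff_sum)
  with birkhoff_sum_le_Psi[OF t] show ?thesis by (simp add: birkhoff_sum_add)
qed

end

lemma gibbs_measureE:
  fixes \<psi> :: "'d::finite seq \<Rightarrow> real"
  assumes "gibbs_measure \<psi> \<nu>"
  obtains c where "\<And>w. w \<noteq> [] \<Longrightarrow> 0 < measure \<nu> (cyl w)"
    and "\<And>w. w \<noteq> [] \<Longrightarrow>
      \<bar>ln (measure \<nu> (cyl w)) - (Psi \<psi> w - real (length w) * pressure \<psi>)\<bar> \<le> c"
proof -
  obtain C where C: "0 < C" and bounds: "\<And>w::'d letter list. 1 \<le> length w \<Longrightarrow>
      inverse C * exp (Psi \<psi> w - real (length w) * pressure \<psi>) \<le> measure \<nu> (cyl w) \<and>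
      measure \<nu> (cyl w) \<le> C * exp (Psi \<psi> w - real (length w) * pressure \<psi>)"
    using assms unfolding gibbs_measure_def by blast
  have pos: "0 < measure \<nu> (cyl w)" if "w \<noteq> []" for w
  proof -
    have "0 < inverse C * exp (Psi \<psi> w - real (length w) * pressure \<psi>)" using C by simp
    with bounds[of w] that show ?thesis by (auto simp: Suc_le_eq)
  qed
  have "\<bar>ln (measure \<nu> (cyl w)) - (Psi \<psi> w - real (length w) * pressure \<psi>)\<bar> \<le> \<bar>ln C\<bar>"
    if w: "w \<noteq> []" for w
  proof -
    have "ln (inverse C * exp (Psi \<psi> w - real (length w) * pressure \<psi>)) \<le> ln (measure \<nu> (cyl w))"
      "ln (measure \<nu> (cyl w)) \<le> ln (C * exp (Psi \<psi> w - real (length w) * pressure \<psi>))"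
      using bounds[of w] pos[OF w] C w by (auto simp: Suc_le_eq)
    then show ?thesis using C by (simp add: ln_mult ln_inverse abs_le_iff) arith
  qed
  with pos show thesis by (rule that)
qed

definition quasi_multiplicative :: "('a list \<Rightarrow> real) \<Rightarrow> real \<Rightarrow> bool" where
  "quasi_multiplicative g C \<longleftrightarrow> (\<forall>u v. u \<noteq> [] \<longrightarrow> v \<noteq> [] \<longrightarrow>
     g u * g v \<le> C * g (u @ v) \<and> g (u @ v) \<le> C * (g u * g v))"

lemma quasi_multiplicativeI_ln:
  assumes pos: "\<And>w. w \<noteq> [] \<Longrightarrow> 0 < g w"
    and qa: "\<And>u v. u \<noteq> [] \<Longrightarrow> v \<noteq> [] \<Longrightarrow> \<bar>ln (g (u @ v)) - ln (g u) - ln (g v)\<bar> \<le> c"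
  shows "quasi_multiplicative g (exp c)"
  unfolding quasi_multiplicative_def
proof (intro allI impI)
  fix u v :: "'a list" assume u: "u \<noteq> []" and v: "v \<noteq> []"
  then have uv: "0 < g u" "0 < g v" "0 < g (u @ v)" using pos by auto
  have "g u * g v = exp (ln (g u) + ln (g v))" using uv by (simp add: exp_add)
  also have "\<dots> \<le> exp (c + ln (g (u @ v)))" using qa[OF u v] by simp
  also have "\<dots> = exp c * g (u @ v)" using uv by (simp add: exp_add)
  finally have lower: "g u * g v \<le> exp c * g (u @ v)" .
  have "g (u @ v) = exp (ln (g (u @ v)))" using uv by simp
  also have "\<dots> \<le> exp (c + (ln (g u) + ln (g v)))" using qa[OF u v] by simp
  also have "\<dots> = exp c * (g u * g v)" using uv by (simp add: exp_add)
  finally show "g u * g v \<le> exp c * g (u @ v) \<and> g (u @ v) \<le> exp c * (g u * g v)"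
    using lower by blast
qed

lemma sum_words_quasi_multiplicative:
  fixes f :: "'a::finite list \<Rightarrow> real"
  assumes qm: "quasi_multiplicative f C" and "1 \<le> m" "1 \<le> n"
  shows "(\<Sum>w\<in>words m. f w) * (\<Sum>w\<in>words n. f w) \<le> C * (\<Sum>w\<in>words (m + n). f w)"
    and "(\<Sum>w\<in>words (m + n). f w) \<le> C * ((\<Sum>w\<in>words m. f w) * (\<Sum>w\<in>words n. f w))"
proof -
  have nonempty: "u \<noteq> []" "v \<noteq> []" if "u \<in> words m" "v \<in> words n" for u v :: "'a list"
    using that assms(2,3) by auto
  note product = sum_product[of f "words m" f "words n"]
  note split = sum_words_add[of f m n]
  show "(\<Sum>w\<in>words m. f w) * (\<Sum>w\<in>words n. f w) \<le> C * (\<Sum>w\<in>words (m + n). f w)"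
    unfolding product split unfolding sum_distrib_left
    using qm nonempty by (intro sum_mono) (auto simp: quasi_multiplicative_def)
  show "(\<Sum>w\<in>words (m + n). f w) \<le> C * ((\<Sum>w\<in>words m. f w) * (\<Sum>w\<in>words n. f w))"
    unfolding product split unfolding sum_distrib_left
    using qm nonempty by (intro sum_mono) (auto simp: quasi_multiplicative_def)
qed

lemma ln_quasi_multiplicative_convergent:
  fixes S :: "nat \<Rightarrow> real"
  assumes pos: "\<And>n. 1 \<le> n \<Longrightarrow> 0 < S n"
    and qm: "\<And>m n. 1 \<le> m \<Longrightarrow> 1 \<le> n \<Longrightarrow> S m * S n \<le> C * S (m + n) \<and> S (m + n) \<le> C * (S m * S n)"
  shows "convergent (\<lambda>n. ln (S n) / n)"
proof (rule quasi_additive_convergent)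
  fix m n :: nat assume m: "1 \<le> m" and n: "1 \<le> n"
  have S: "0 < S m" "0 < S n" "0 < S (m + n)" using pos m n by auto
  then have C: "0 < C" using qm[OF m n] by (metis mult_pos_pos zero_less_mult_pos2 order.strict_trans2)
  have "ln (S m * S n) \<le> ln (C * S (m + n))" "ln (S (m + n)) \<le> ln (C * (S m * S n))"
    using qm[OF m n] S C by simp_all
  then show "\<bar>ln (S (m + n)) - ln (S m) - ln (S n)\<bar> \<le> ln C"
    using S C by (simp add: ln_mult abs_le_iff)
qed

section \<open>The \<open>L\<^sup>q\<close>-spectrum of a Gibbs capacity\<close>

locale gibbs_capacity =
  fixes \<psi> :: "'d::finite seq \<Rightarrow> real" and \<nu> :: "'d seq measure" and K \<alpha> \<beta> :: real
  assumes holder: "holder_potential \<psi>" and gibbs: "gibbs_measure \<psi> \<nu>"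
    and K_pos: "0 < K" and \<alpha>_nonneg: "0 \<le> \<alpha>" and \<beta>_nonneg: "0 \<le> \<beta>"
begin

abbreviation \<mu> :: "'d letter list \<Rightarrow> real" where
  "\<mu> \<equiv> gcap K \<alpha> \<beta> \<nu>"

lemma measure_cyl_pos: "w \<noteq> [] \<Longrightarrow> 0 < measure \<nu> (cyl w)"
  using gibbs_measureE[OF gibbs] by blast

lemma gcap_pos:
  assumes "w \<noteq> []"
  shows "0 < \<mu> w"
  using measure_cyl_pos[OF assms] K_pos by (simp add: gcap_def)

lemma gcap_powr_pos: "w \<noteq> [] \<Longrightarrow> 0 < \<mu> w powr q"
  using gcap_pos[of w] by simp

lemma gcap_le_K: "\<mu> w \<le> K"
proof -
  have "measure \<nu> (cyl w) \<le> 1"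
    using gibbs by (simp add: gibbs_measure_def prob_space.prob_le_1)
  then have "measure \<nu> (cyl w) powr \<alpha> \<le> 1"
    using powr_mono2[OF \<alpha>_nonneg measure_nonneg] by fastforce
  moreover have "exp (- \<beta> * real (length w)) \<le> 1"
    using \<beta>_nonneg by simp
  ultimately show ?thesis
    using K_pos unfolding gcap_def
    by (simp add: mult.assoc mult_left_le mult_le_one)
qed

lemma ln_gcap_quasi_additive:
  obtains c where "\<And>u v. u \<noteq> [] \<Longrightarrow> v \<noteq> [] \<Longrightarrow>
    \<bar>ln (\<mu> (u @ v)) - ln (\<mu> u) - ln (\<mu> v)\<bar> \<le> c"
proof -
  obtain D where D: "\<And>w s t. s \<in> cyl w \<Longrightarrow> t \<in> cyl w \<Longrightarrow>
      \<bar>birkhoff_sum \<psi> (length w) s - birkhoff_sum \<psi> (length w) t\<bar> \<le> D"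
    using holder holder_bounded_distortion by blast
  obtain c where c: "\<And>w. w \<noteq> [] \<Longrightarrow>
      \<bar>ln (measure \<nu> (cyl w)) - (Psi \<psi> w - real (length w) * pressure \<psi>)\<bar> \<le> c"
    using gibbs gibbs_measureE by blast
  define m where "m w = ln (measure \<nu> (cyl w))" for w
  have m_qa: "\<bar>m (u @ v) - m u - m v\<bar> \<le> 3 * c + 2 * D" if "u \<noteq> []" "v \<noteq> []" for u v
    using c[of u] c[of v] c[of "u @ v"] that Psi_append_le[OF D, of u v] Psi_append_ge[OF D, of u v]
    by (simp add: m_def abs_le_iff algebra_simps)
  have ln_gcap: "ln (\<mu> w) = ln K + \<alpha> * m w - \<beta> * length w" if "w \<noteq> []" for w
    using measure_cyl_pos[OF that] K_pos by (simp add: gcap_def m_def ln_mult ln_powr)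
  have "\<bar>ln (\<mu> (u @ v)) - ln (\<mu> u) - ln (\<mu> v)\<bar> \<le> \<alpha> * (3 * c + 2 * D) + \<bar>ln K\<bar>"
    if uv: "u \<noteq> []" "v \<noteq> []" for u v
  proof -
    have uv_ne: "u @ v \<noteq> []" using uv by simp
    have "ln (\<mu> (u @ v)) - ln (\<mu> u) - ln (\<mu> v) = \<alpha> * (m (u @ v) - m u - m v) - ln K"
      by (simp only: ln_gcap[OF uv(1)] ln_gcap[OF uv(2)] ln_gcap[OF uv_ne]
          length_append of_nat_add) (simp add: algebra_simps)
    moreover have "\<alpha> * \<bar>m (u @ v) - m u - m v\<bar> \<le> \<alpha> * (3 * c + 2 * D)"
      using m_qa[OF uv] \<alpha>_nonneg by (rule mult_left_mono)
    moreover have "\<bar>\<alpha> * (m (u @ v) - m u - m v)\<bar> = \<alpha> * \<bar>m (u @ v) - m u - m v\<bar>"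
      using \<alpha>_nonneg by (simp add: abs_mult)
    ultimately show ?thesis by (simp only:)
  qed
  then show thesis by (rule that)
qed

definition partition_sum :: "real \<Rightarrow> nat \<Rightarrow> real" where
  "partition_sum q n = (\<Sum>w\<in>words n. \<mu> w powr q)"

lemma partition_sum_pos: "1 \<le> n \<Longrightarrow> 0 < partition_sum q n"
  unfolding partition_sum_def using gcap_pos by (rule sum_words_powr_pos)

lemma tau_LIMSEQ: "(\<lambda>n. - log 2 (partition_sum q n) / n) \<longlonglongrightarrow> tau K \<alpha> \<beta> \<nu> q"
proof -
  obtain c where c: "\<And>u v. u \<noteq> [] \<Longrightarrow> v \<noteq> [] \<Longrightarrow>
      \<bar>ln (\<mu> (u @ v)) - ln (\<mu> u) - ln (\<mu> v)\<bar> \<le> c"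
    using ln_gcap_quasi_additive by blast
  have "quasi_multiplicative (\<lambda>w. \<mu> w powr q) (exp (\<bar>q\<bar> * c))"
  proof (rule quasi_multiplicativeI_ln)
    fix u v :: "'d letter list" assume "u \<noteq> []" "v \<noteq> []"
    then show "\<bar>ln (\<mu> (u @ v) powr q) - ln (\<mu> u powr q) - ln (\<mu> v powr q)\<bar> \<le> \<bar>q\<bar> * c"
      using c[of u v] gcap_pos[of u] gcap_pos[of v] gcap_pos[of "u @ v"]
      by (simp add: ln_powr abs_mult right_diff_distrib[symmetric] mult_left_mono)
  qed (rule gcap_powr_pos)
  then have "convergent (\<lambda>n. ln (partition_sum q n) / n)"
    using sum_words_quasi_multiplicative partition_sum_pos
    by (intro ln_quasi_multiplicative_convergent) (auto simp: partition_sum_def)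
  then obtain L where "(\<lambda>n. ln (partition_sum q n) / n) \<longlonglongrightarrow> L"
    by (auto simp: convergent_def)
  then have "(\<lambda>n. - (ln (partition_sum q n) / n) / ln 2) \<longlonglongrightarrow> - L / ln 2"
    using ln_gt_zero[of 2] by (intro tendsto_intros) simp_all
  then have lim: "(\<lambda>n. - log 2 (partition_sum q n) / n) \<longlonglongrightarrow> - L / ln 2"
    by (simp add: log_def mult.commute)
  then have "tau K \<alpha> \<beta> \<nu> q = - L / ln 2"
    unfolding tau_def partition_sum_def[symmetric] by (rule limI)
  with lim show ?thesis by simp
qed

lemma concave_tau: "concave_on UNIV (tau K \<alpha> \<beta> \<nu>)"
proof (rule concave_on_LIMSEQ[OF _ tau_LIMSEQ])
  show "\<forall>\<^sub>F n in sequentially. concave_on UNIV (\<lambda>q. - log 2 (partition_sum q n) / n)"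
    unfolding eventually_sequentially
  proof (intro exI allI impI)
    fix n :: nat assume n: "1 \<le> n"
    have mix: "l * (- log 2 (partition_sum p n) / n) + (1 - l) * (- log 2 (partition_sum r n) / n)
        \<le> - log 2 (partition_sum (l * p + (1 - l) * r) n) / n" if l: "0 \<le> l" "l \<le> 1" for l p r
    proof -
      have pos: "0 < partition_sum q n" for q using partition_sum_pos[OF n] .
      have "partition_sum (l * p + (1 - l) * r) n \<le> partition_sum p n powr l * partition_sum r n powr (1 - l)"
        unfolding partition_sum_def
        using n gcap_pos by (intro sum_powr_log_convex[OF finite_words words_nonempty _ l])
          (auto simp: Suc_le_eq)
      then have "log 2 (partition_sum (l * p + (1 - l) * r) n)
          \<le> log 2 (partition_sum p n powr l * partition_sum r n powr (1 - l))"
        using pos by (intro log_mono) auto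
      also have "\<dots> = l * log 2 (partition_sum p n) + (1 - l) * log 2 (partition_sum r n)"
        using pos[of p] pos[of r] by (simp add: log_mult_pos log_powr)
      finally have "log 2 (partition_sum (l * p + (1 - l) * r) n)
          \<le> l * log 2 (partition_sum p n) + (1 - l) * log 2 (partition_sum r n)" .
      then have "- (l * log 2 (partition_sum p n) + (1 - l) * log 2 (partition_sum r n)) / n
          \<le> - log 2 (partition_sum (l * p + (1 - l) * r) n) / n"
        by (intro divide_right_mono) auto
      then show ?thesis by (simp add: add_divide_distrib diff_divide_distrib)
    qed
    show "concave_on UNIV (\<lambda>q. - log 2 (partition_sum q n) / n)"
      unfolding concave_on_iff
    proof (intro conjI convex_UNIV ballI allI impI)
      fix p r u v :: real assume "0 \<le> u" "0 \<le> v" "u + v = 1"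
      then have "v = 1 - u" "u \<le> 1" by auto
      then show "u * (- log 2 (partition_sum p n) / n) + v * (- log 2 (partition_sum r n) / n)
          \<le> - log 2 (partition_sum (u *\<^sub>R p + v *\<^sub>R r) n) / n"
        using mix[of u p r] \<open>0 \<le> u\<close> by simp
    qed
  qed
qed

lemma mono_tau: "mono (tau K \<alpha> \<beta> \<nu>)"
proof (rule monoI, rule tendsto_le[OF trivial_limit_sequentially])
  fix q q' :: real assume qq': "q \<le> q'"
  define c where "c = (q' - q) * log 2 K"
  show "(\<lambda>n. - log 2 (partition_sum q' n) / n + c / n) \<longlonglongrightarrow> tau K \<alpha> \<beta> \<nu> q'"
    using tendsto_add[OF tau_LIMSEQ lim_const_over_n[of c]] by simp
  show "(\<lambda>n. - log 2 (partition_sum q n) / n) \<longlonglongrightarrow> tau K \<alpha> \<beta> \<nu> q"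
    by (rule tau_LIMSEQ)
  show "\<forall>\<^sub>F n in sequentially. - log 2 (partition_sum q n) / n \<le> - log 2 (partition_sum q' n) / n + c / n"
    unfolding eventually_sequentially
  proof (intro exI allI impI)
    fix n :: nat assume n: "1 \<le> n"
    have "\<mu> w powr q' \<le> K powr (q' - q) * \<mu> w powr q" if "w \<in> words n" for w
    proof -
      have "\<mu> w powr q' = \<mu> w powr (q' - q) * \<mu> w powr q"
        by (simp flip: powr_add)
      also have "\<dots> \<le> K powr (q' - q) * \<mu> w powr q"
        using that n qq' gcap_pos[of w] gcap_le_K[of w]
        by (intro mult_right_mono powr_mono2) (auto simp: Suc_le_eq)
      finally show ?thesis .
    qed
    then have "partition_sum q' n \<le> K powr (q' - q) * partition_sum q n"
      unfolding partition_sum_def sum_distrib_left by (rule sum_mono)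
    then have "log 2 (partition_sum q' n) \<le> log 2 (K powr (q' - q) * partition_sum q n)"
      using partition_sum_pos[OF n] by (intro log_mono) auto
    also have "\<dots> = c + log 2 (partition_sum q n)"
      using partition_sum_pos[OF n, of q] K_pos by (simp add: c_def log_mult_pos log_powr)
    finally have "log 2 (partition_sum q' n) \<le> c + log 2 (partition_sum q n)" .
    then show "- log 2 (partition_sum q n) / n \<le> - log 2 (partition_sum q' n) / n + c / n"
      using n by (simp add: divide_right_mono field_simps)
  qed
qed

lemma tau_zero: "tau K \<alpha> \<beta> \<nu> 0 = - real CARD('d)"
proof (rule LIMSEQ_unique[OF tau_LIMSEQ])
  have "partition_sum 0 n = 2 powr (CARD('d) * n)" if "1 \<le> n" for n
  proof -
    have "partition_sum 0 n = (\<Sum>w\<in>(words n :: 'd letter list set). 1)"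
      unfolding partition_sum_def
      by (rule sum.cong[OF refl]) (use that gcap_pos in \<open>auto simp: Suc_le_eq less_imp_neq[symmetric]\<close>)
    also have "\<dots> = card (words n :: 'd letter list set)" by simp
    also have "\<dots> = (2::real) ^ (CARD('d) * n)"
      by (simp add: card_words power_mult)
    also have "\<dots> = 2 powr (CARD('d) * n)"
      by (subst powr_realpow[symmetric]) auto
    finally show ?thesis .
  qed
  then have "\<forall>\<^sub>F n in sequentially. - real CARD('d) = - log 2 (partition_sum 0 n) / n"
    unfolding eventually_sequentially by (intro exI[of _ 1]) auto
  then show "(\<lambda>n. - log 2 (partition_sum 0 n) / n) \<longlonglongrightarrow> - real CARD('d)"
    by (rule Lim_transform_eventually[OF tendsto_const])
qed

text \<open>A supergradient \<open>H\<^sub>0 \<ge> 0\<close> of \<open>\<tau>\<close> at \<open>0\<close> satisfies \<open>D(H\<^sub>0) \<ge> d\<close>, so \<open>H_l \<le> H\<^sub>0\<close>; for \<open>H < H\<^sub>0\<close>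
  a negative \<open>q\<close> cannot violate \<open>D(H) \<ge> d (1 - \<eta>)\<close>.\<close>

lemma tau_gap_below_H_l:
  fixes \<eta> H :: real
  assumes "0 \<le> \<eta>" "0 \<le> H" "H < H_l K \<alpha> \<beta> \<nu> \<eta>"
  obtains q where "0 \<le> q" "q * H - tau K \<alpha> \<beta> \<nu> q < CARD('d) * (1 - \<eta>)"
proof -
  define d where "d = real CARD('d)"
  define S where "S = {H. 0 \<le> H \<and> ereal (d * (1 - \<eta>)) \<le> Dspec K \<alpha> \<beta> \<nu> H}"
  have H_l: "H_l K \<alpha> \<beta> \<nu> \<eta> = Inf S" by (simp add: H_l_def S_def d_def)
  obtain H0 where H0: "0 \<le> H0" "\<And>q. tau K \<alpha> \<beta> \<nu> q \<le> - d + H0 * q"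
    using concave_mono_supergradient[OF concave_tau mono_tau] tau_zero by (auto simp: d_def)
  have above_d: "d * (1 - \<eta>) \<le> q * H0 - tau K \<alpha> \<beta> \<nu> q" for q
  proof -
    have "0 \<le> \<eta> * d" using assms(1) by (simp add: d_def)
    then show ?thesis using H0(2)[of q] by (simp add: algebra_simps)
  qed
  then have "H0 \<in> S" unfolding S_def Dspec_def using H0(1) by (auto intro: INF_greatest)
  moreover have bdd: "bdd_below S" unfolding S_def by (auto intro: bdd_belowI[of _ 0])
  ultimately have "H \<notin> S" "H < H0"
    using assms(3) H_l cInf_lower[OF _ bdd] by (fastforce simp: not_le[symmetric])+
  then have "Dspec K \<alpha> \<beta> \<nu> H < ereal (d * (1 - \<eta>))"
    using assms(2) by (auto simp: S_def)
  then obtain q where q: "q * H - tau K \<alpha> \<beta> \<nu> q < d * (1 - \<eta>)"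
    unfolding Dspec_def by (auto simp: INF_less_iff)
  moreover have "0 \<le> q"
  proof (rule ccontr)
    assume "\<not> 0 \<le> q"
    then have "q * H0 \<le> q * H" using \<open>H < H0\<close> by (simp add: mult_le_cancel_left)
    with q above_d[of q] show False by linarith
  qed
  ultimately show thesis using that by (simp add: d_def)
qed

end

section \<open>Random sampling of words\<close>

locale sampling_process =
  fixes \<Omega> :: "'a measure" and \<eta> :: real and p :: "'d::finite letter list \<Rightarrow> 'a \<Rightarrow> bool"
  assumes sampling: "sampling \<Omega> \<eta> p" and \<eta>_pos: "0 < \<eta>" and \<eta>_less_1: "\<eta> < 1"
begin

sublocale prob_space \<Omega>
  using sampling by (simp add: sampling_def)

abbreviation sampled :: "'d letter list \<Rightarrow> 'a set" where
  "sampled w \<equiv> {\<omega>\<in>space \<Omega>. p w \<omega>}"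

lemma indep_sampling: "indep_vars (\<lambda>_. count_space UNIV) p {w. w \<noteq> []}"
  using sampling by (simp add: sampling_def)

lemma sampled_measurable: "w \<noteq> [] \<Longrightarrow> sampled w \<in> events"
  using indep_sampling measurable_sets[of "p w" \<Omega> "count_space UNIV" "{True}"]
  unfolding indep_vars_def2 by (auto simp: vimage_def Int_def conj_commute)

lemma prob_sampled:
  "w \<noteq> [] \<Longrightarrow> prob (sampled w) = 2 powr (- real CARD('d) * (1 - \<eta>) * length w)"
  using sampling by (simp add: sampling_def)

lemma prob_none_sampled:
  assumes "finite J" "J \<noteq> {}" "\<And>u. u \<in> J \<Longrightarrow> u \<noteq> []"
  shows "prob {\<omega>\<in>space \<Omega>. \<forall>u\<in>J. \<not> p u \<omega>} = (\<Prod>u\<in>J. 1 - prob (sampled u))"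
proof -
  have "indep_sets (\<lambda>w. {p w -` A \<inter> space \<Omega> | A. A \<in> sets (count_space UNIV)}) {w. w \<noteq> []}"
    using indep_sampling unfolding indep_vars_def2 by blast
  then have "prob (\<Inter>u\<in>J. p u -` {False} \<inter> space \<Omega>) = (\<Prod>u\<in>J. prob (p u -` {False} \<inter> space \<Omega>))"
    using assms by (intro indep_setsD) auto
  moreover have "p u -` {False} \<inter> space \<Omega> = space \<Omega> - sampled u" for u by auto
  moreover have "(\<Inter>u\<in>J. space \<Omega> - sampled u) = {\<omega>\<in>space \<Omega>. \<forall>u\<in>J. \<not> p u \<omega>}"
    using assms(2) by auto
  ultimately show ?thesis
    using assms(3) by (simp add: prob_compl sampled_measurable)
qed

lemma prob_some_sampled_le:
  assumes "finite B" "\<And>u. u \<in> B \<Longrightarrow> u \<noteq> [] \<and> length u = n"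
  shows "prob {\<omega>\<in>space \<Omega>. \<exists>u\<in>B. p u \<omega>} \<le> card B * 2 powr (- real CARD('d) * (1 - \<eta>) * n)"
proof -
  have "{\<omega>\<in>space \<Omega>. \<exists>u\<in>B. p u \<omega>} = (\<Union>u\<in>B. sampled u)" by auto
  moreover have "prob (\<Union>u\<in>B. sampled u) \<le> (\<Sum>u\<in>B. prob (sampled u))"
    using assms sampled_measurable by (intro finite_measure_subadditive_finite) auto
  moreover have "(\<Sum>u\<in>B. prob (sampled u)) = (\<Sum>u\<in>B. 2 powr (- real CARD('d) * (1 - \<eta>) * n))"
    using assms prob_sampled by (intro sum.cong) auto
  ultimately show ?thesis by simp
qed

text \<open>There are \<open>2^(d (n + 1))\<close> extensions by \<open>n + 1\<close> letters, each sampled independently with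
  probability \<open>2^(-d (1 - \<eta>) (|w| + n + 1))\<close>; as \<open>\<eta> > 0\<close> the expected number of sampled ones
  grows geometrically in \<open>n\<close>.\<close>

lemma prob_no_sampled_extension_le:
  "prob {\<omega>\<in>space \<Omega>. \<forall>v\<in>words (Suc n). \<not> p (w @ v) \<omega>}
    \<le> 2 powr (CARD('d) * (1 - \<eta>) * length w) * (2 powr (- CARD('d) * \<eta>)) ^ Suc n"
proof -
  define d where "d = real CARD('d)"
  define \<pi> where "\<pi> = 2 powr (- d * (1 - \<eta>) * (length w + Suc n))"
  define U where "U = (\<lambda>v. w @ v) ` words (Suc n)"
  have card_U: "card U = 2 powr (d * Suc n)"
  proof -
    have "card U = card (words (Suc n) :: 'd letter list set)"
      unfolding U_def by (rule card_image) (simp add: inj_on_def)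
    then have "real (card U) = (2::real) ^ (CARD('d) * Suc n)"
      by (simp add: card_words power_add flip: power_mult)
    also have "\<dots> = 2 powr (d * Suc n)"
      by (subst powr_realpow[symmetric]) (auto simp: d_def algebra_simps)
    finally show ?thesis .
  qed
  have U: "finite U" "U \<noteq> {}" "\<And>u. u \<in> U \<Longrightarrow> u \<noteq> [] \<and> length u = length w + Suc n"
    unfolding U_def using finite_words words_nonempty by auto
  have "\<pi> \<le> 2 powr 0"
    unfolding \<pi>_def using \<eta>_less_1 by (intro powr_mono) (auto simp: d_def intro!: mult_nonneg_nonneg)
  then have \<pi>: "0 < \<pi>" "\<pi> \<le> 1" by (auto simp: \<pi>_def)
  have "prob {\<omega>\<in>space \<Omega>. \<forall>v\<in>words (Suc n). \<not> p (w @ v) \<omega>} = prob {\<omega>\<in>space \<Omega>. \<forall>u\<in>U. \<not> p u \<omega>}"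
    by (simp add: U_def)
  also have "\<dots> = (1 - \<pi>) ^ card U"
    using U by (simp add: prob_none_sampled prob_sampled \<pi>_def d_def)
  also have "\<dots> \<le> 1 / (\<pi> * card U)"
    using U \<pi> by (intro one_minus_power_le_inverse) (auto simp: card_gt_0_iff)
  also have "\<dots> = 2 powr (d * (1 - \<eta>) * (length w + Suc n) - d * Suc n)"
    unfolding card_U \<pi>_def by (simp add: powr_add[symmetric] powr_minus_divide[symmetric])
  also have "\<dots> = 2 powr (d * (1 - \<eta>) * length w) * 2 powr (- d * \<eta> * Suc n)"
    by (simp add: powr_add[symmetric] algebra_simps)
  also have "2 powr (- d * \<eta> * Suc n) = (2 powr (- d * \<eta>)) ^ Suc n"
    by (subst powr_realpow[symmetric]) (simp_all add: powr_powr)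
  finally show ?thesis by (simp add: d_def)
qed

text \<open>\<open>Msamp\<close> is a supremum, which takes a junk value unless some extension is sampled.\<close>

lemma AE_sampled_extension: "AE \<omega> in \<Omega>. \<forall>w. \<exists>v. v \<noteq> [] \<and> p (w @ v) \<omega>"
proof -
  have "AE \<omega> in \<Omega>. \<exists>v. v \<noteq> [] \<and> p (w @ v) \<omega>" for w
  proof -
    define none where "none n = {\<omega>\<in>space \<Omega>. \<forall>v\<in>words (Suc n). \<not> p (w @ v) \<omega>}" for n
    have none_events: "none n \<in> events" for n
    proof -
      have "{\<omega>\<in>space \<Omega>. \<not> p u \<omega>} = space \<Omega> - sampled u" for u by auto
      then show ?thesis
        unfolding none_def using finite_words sampled_measurable
        by (intro sets.sets_Collect_finite_All) (auto intro!: sets.compl_sets sampled_measurable)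
    qed
    define r :: real where "r = 2 powr (- CARD('d) * \<eta>)"
    have r: "0 < r" "r < 1" using \<eta>_pos by (auto simp: r_def powr_less_one)
    have lim: "(\<lambda>n. 2 powr (CARD('d) * (1 - \<eta>) * length w) * (r * r ^ n)) \<longlonglongrightarrow>
        2 powr (CARD('d) * (1 - \<eta>) * length w) * (r * 0)"
      using r by (intro tendsto_intros LIMSEQ_power_zero) simp
    have "prob (\<Inter>n. none n) \<le> 2 powr (CARD('d) * (1 - \<eta>) * length w) * (r * r ^ n)" for n
    proof -
      have "prob (\<Inter>n. none n) \<le> prob (none n)"
        using none_events by (intro finite_measure_mono) auto
      with prob_no_sampled_extension_le[of n w] show ?thesis by (simp add: none_def r_def)
    qed
    then have "prob (\<Inter>n. none n) \<le> 2 powr (CARD('d) * (1 - \<eta>) * length w) * (r * 0)"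
      by (intro LIMSEQ_le_const[OF lim]) blast
    then have "(\<Inter>n. none n) \<in> null_sets \<Omega>"
      using none_events by (auto simp: null_sets_def emeasure_eq_measure measure_le_0_iff)
    moreover have "{\<omega>\<in>space \<Omega>. \<not> (\<exists>v. v \<noteq> [] \<and> p (w @ v) \<omega>)} \<subseteq> (\<Inter>n. none n)"
    proof (clarsimp simp: none_def)
      fix \<omega> n and v :: "'d letter list"
      assume "\<forall>v. v = [] \<or> \<not> p (w @ v) \<omega>" "length v = Suc n" "p (w @ v) \<omega>"
      moreover have "v \<noteq> []" using \<open>length v = Suc n\<close> by auto
      ultimately show False by blast
    qed
    ultimately show ?thesis by (rule AE_I')
  qed
  then show ?thesis by (simp add: AE_all_countable)
qed

lemma sampled_above_measurable:
  "{\<omega>\<in>space \<Omega>. \<exists>u\<in>words n. u \<noteq> [] \<and> t < g u \<and> p u \<omega>} \<in> events"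
proof (rule sets.sets_Collect_finite_Ex[OF _ finite_words])
  fix u :: "'d letter list"
  show "{\<omega>\<in>space \<Omega>. u \<noteq> [] \<and> t < g u \<and> p u \<omega>} \<in> events"
  proof (cases "u \<noteq> [] \<and> t < g u")
    case True
    then have "{\<omega>\<in>space \<Omega>. u \<noteq> [] \<and> t < g u \<and> p u \<omega>} = sampled u" by blast
    moreover have "sampled u \<in> events" using True sampled_measurable by blast
    ultimately show ?thesis by (simp only:)
  next
    case False
    then have "{\<omega>\<in>space \<Omega>. u \<noteq> [] \<and> t < g u \<and> p u \<omega>} = {}" by blast
    then show ?thesis by (simp only: sets.empty_sets)
  qed
qed

lemma prob_sampled_above_le:
  fixes g :: "'d letter list \<Rightarrow> real"
  assumes "0 \<le> q" "0 < t" "\<And>u. u \<in> words n \<Longrightarrow> 0 \<le> g u"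
  shows "prob {\<omega>\<in>space \<Omega>. \<exists>u\<in>words n. u \<noteq> [] \<and> t < g u \<and> p u \<omega>}
    \<le> t powr (- q) * (\<Sum>u\<in>words n. g u powr q) * 2 powr (- real CARD('d) * (1 - \<eta>) * n)"
proof -
  define B where "B = {u\<in>words n. u \<noteq> [] \<and> t < g u}"
  have B_sub: "B \<subseteq> {u\<in>words n. t < g u}" by (auto simp: B_def)
  moreover have fin: "finite {u\<in>words n. t < g u}"
    by (rule finite_subset[OF _ finite_words[of n]]) auto
  ultimately have B: "finite B" by (rule finite_subset)
  have "{\<omega>\<in>space \<Omega>. \<exists>u\<in>words n. u \<noteq> [] \<and> t < g u \<and> p u \<omega>} = {\<omega>\<in>space \<Omega>. \<exists>u\<in>B. p u \<omega>}"
    by (auto simp: B_def)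
  also have "prob \<dots> \<le> card B * 2 powr (- real CARD('d) * (1 - \<eta>) * n)"
    using B by (rule prob_some_sampled_le) (simp add: B_def)
  also have "\<dots> \<le> card {u\<in>words n. t < g u} * 2 powr (- real CARD('d) * (1 - \<eta>) * n)"
    using B_sub fin by (intro mult_right_mono) (simp_all add: card_mono)
  also have "\<dots> \<le> t powr (- q) * (\<Sum>u\<in>words n. g u powr q) * 2 powr (- real CARD('d) * (1 - \<eta>) * n)"
    using assms by (intro mult_right_mono card_superlevel_le_sum_powr finite_words) simp_all
  finally show ?thesis .
qed

lemma eventually_prob_sampled_above_le:
  fixes g :: "'d letter list \<Rightarrow> real" and q H \<tau> :: real
  assumes g_pos: "\<And>u. u \<noteq> [] \<Longrightarrow> 0 < g u" and q: "0 \<le> q"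
    and lim: "(\<lambda>n. - log 2 (\<Sum>u\<in>words n. g u powr q) / n) \<longlonglongrightarrow> \<tau>"
    and gap: "q * H - \<tau> < CARD('d) * (1 - \<eta>)"
  obtains r where "0 \<le> r" "r < 1" "\<forall>\<^sub>F n in sequentially.
    prob {\<omega>\<in>space \<Omega>. \<exists>u\<in>words n. u \<noteq> [] \<and> 2 powr (- H * n) < g u \<and> p u \<omega>} \<le> r ^ n"
proof -
  define \<delta> where "\<delta> = (CARD('d) * (1 - \<eta>) - (q * H - \<tau>)) / 2"
  have \<delta>: "0 < \<delta>" using gap by (simp add: \<delta>_def)
  define S where "S n = (\<Sum>u\<in>words n. g u powr q)" for n
  have "\<forall>\<^sub>F n in sequentially. \<tau> - \<delta> < - log 2 (S n) / n"
    unfolding S_def using \<delta> by (intro order_tendstoD(1)[OF lim]) linarith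
  then have "\<forall>\<^sub>F n in sequentially.
    prob {\<omega>\<in>space \<Omega>. \<exists>u\<in>words n. u \<noteq> [] \<and> 2 powr (- H * n) < g u \<and> p u \<omega>} \<le> (2 powr (- \<delta>)) ^ n"
    using eventually_ge_at_top[of 1]
  proof eventually_elim
    case (elim n)
    have S_pos: "0 < S n"
      unfolding S_def using g_pos elim(2) by (rule sum_words_powr_pos)
    have S_le: "S n \<le> 2 powr (- n * (\<tau> - \<delta>))"
      using S_pos elim by (intro le_two_powr_of_less_log_div) auto
    have "prob {\<omega>\<in>space \<Omega>. \<exists>u\<in>words n. u \<noteq> [] \<and> 2 powr (- H * n) < g u \<and> p u \<omega>}
        \<le> (2 powr (- H * n)) powr (- q) * S n * 2 powr (- real CARD('d) * (1 - \<eta>) * n)"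
    proof -
      have "0 \<le> g u" if "u \<in> words n" for u
        using g_pos[of u] that elim(2) by (cases u) auto
      then show ?thesis unfolding S_def by (intro prob_sampled_above_le q) simp_all
    qed
    also have "\<dots> \<le> 2 powr (H * n * q) * 2 powr (- n * (\<tau> - \<delta>)) * 2 powr (- real CARD('d) * (1 - \<eta>) * n)"
      using S_le by (simp add: powr_powr)
    also have "\<dots> = 2 powr (H * n * q + - n * (\<tau> - \<delta>) + - real CARD('d) * (1 - \<eta>) * n)"
      by (simp only: powr_add)
    also have "H * n * q + - n * (\<tau> - \<delta>) + - real CARD('d) * (1 - \<eta>) * n = - \<delta> * n"
      by (simp add: \<delta>_def field_simps)
    also have "2 powr (- \<delta> * n) = (2 powr (- \<delta>)) ^ n"
      by (subst powr_realpow[symmetric]) (simp_all add: powr_powr)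
    finally show ?case .
  qed
  moreover have "0 \<le> 2 powr (- \<delta>)" "2 powr (- \<delta>) < 1" using \<delta> by (simp_all add: powr_less_one)
  ultimately show thesis using that by blast
qed

lemma AE_eventually_sampled_le:
  fixes g :: "'d letter list \<Rightarrow> real" and q H \<tau> :: real
  assumes "\<And>u. u \<noteq> [] \<Longrightarrow> 0 < g u" and "0 \<le> q"
    and "(\<lambda>n. - log 2 (\<Sum>u\<in>words n. g u powr q) / n) \<longlonglongrightarrow> \<tau>"
    and "q * H - \<tau> < CARD('d) * (1 - \<eta>)"
  shows "AE \<omega> in \<Omega>. \<forall>\<^sub>F n in sequentially. \<forall>u\<in>words n. u \<noteq> [] \<longrightarrow> p u \<omega> \<longrightarrow> g u \<le> 2 powr (- H * n)"
proof -
  define A where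
    "A n = {\<omega>\<in>space \<Omega>. \<exists>u\<in>words n. u \<noteq> [] \<and> 2 powr (- H * n) < g u \<and> p u \<omega>}" for n
  obtain r where r: "0 \<le> r" "r < 1" and ev: "\<forall>\<^sub>F n in sequentially. prob (A n) \<le> r ^ n"
    using eventually_prob_sampled_above_le[OF assms] unfolding A_def by blast
  from ev have "\<forall>\<^sub>F n in sequentially. norm (prob (A n)) \<le> r ^ n"
    by (rule eventually_mono) simp
  moreover have "summable (\<lambda>n. r ^ n)" using r by (intro summable_geometric) simp
  ultimately have summable: "summable (\<lambda>n. prob (A n))"
    by (rule summable_comparison_test_ev)
  have "AE \<omega> in \<Omega>. \<forall>\<^sub>F n in sequentially. \<omega> \<in> space \<Omega> - A n"
  proof (rule borel_cantelli_AE1)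
    show "A n \<in> events" for n unfolding A_def by (rule sampled_above_measurable)
  qed (simp_all add: emeasure_eq_measure summable)
  then show ?thesis
  proof (rule eventually_mono)
    fix \<omega> assume "\<forall>\<^sub>F n in sequentially. \<omega> \<in> space \<Omega> - A n"
    then show "\<forall>\<^sub>F n in sequentially. \<forall>u\<in>words n. u \<noteq> [] \<longrightarrow> p u \<omega> \<longrightarrow> g u \<le> 2 powr (- H * n)"
    proof (rule eventually_mono, intro ballI impI)
      fix n and u :: "'d letter list"
      assume "\<omega> \<in> space \<Omega> - A n" "u \<in> words n" "u \<noteq> []" "p u \<omega>"
      then have "\<not> 2 powr (- H * n) < g u" unfolding A_def by blast
      then show "g u \<le> 2 powr (- H * n)" by linarith
    qed
  qed
qed

end

section \<open>Maxima over sampled extensions\<close>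

lemma eventually_extensions_le:
  fixes g :: "'a list \<Rightarrow> real" and H :: real
  assumes "\<forall>\<^sub>F n in sequentially. \<forall>u\<in>words n. u \<noteq> [] \<longrightarrow> P u \<longrightarrow> g u \<le> 2 powr (- H * n)"
    and "0 \<le> H"
  shows "\<forall>\<^sub>F j in sequentially. \<forall>u v. length u = j \<longrightarrow> v \<noteq> [] \<longrightarrow> P (u @ v) \<longrightarrow>
    g (u @ v) \<le> 2 powr (- H * j)"
proof -
  obtain N where N: "\<And>u. N \<le> length u \<Longrightarrow> u \<noteq> [] \<Longrightarrow> P u \<Longrightarrow> g u \<le> 2 powr (- H * length u)"
    using assms(1) unfolding eventually_sequentially by blast
  show ?thesis
    unfolding eventually_sequentially
  proof (intro exI[of _ N] allI impI)
    fix j and u v :: "'a list"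
    assume "N \<le> j" "length u = j" "v \<noteq> []" "P (u @ v)"
    then have "g (u @ v) \<le> 2 powr (- H * length (u @ v))" by (intro N) auto
    also have "\<dots> \<le> 2 powr (- H * j)"
      using assms(2) \<open>length u = j\<close> by (intro powr_mono) (auto intro!: mult_left_mono)
    finally show "g (u @ v) \<le> 2 powr (- H * j)" .
  qed
qed

lemma Mtilde_bounds:
  fixes w :: "'d::finite letter list"
  assumes "\<And>u. length u = length w \<Longrightarrow> 0 < Msamp K \<alpha> \<beta> \<nu> p \<omega> u \<and> Msamp K \<alpha> \<beta> \<nu> p \<omega> u \<le> b"
  shows "0 < Mtilde K \<alpha> \<beta> \<nu> p \<omega> w \<and> Mtilde K \<alpha> \<beta> \<nu> p \<omega> w \<le> b"
proof -
  have "finite (nbrs w)"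
    by (rule finite_subset[OF _ finite_words[of "length w"]]) (auto simp: nbrs_def)
  moreover have "w \<in> nbrs w" by (simp add: nbrs_def)
  ultimately have "Mtilde K \<alpha> \<beta> \<nu> p \<omega> w \<in> (\<lambda>u. Msamp K \<alpha> \<beta> \<nu> p \<omega> u) ` nbrs w"
    unfolding Mtilde_def by (intro Max_in) auto
  then show ?thesis using assms by (auto simp: nbrs_def)
qed

context gibbs_capacity
begin

lemma Msamp_bounds:
  assumes "v \<noteq> []" "p (w @ v) \<omega>"
    and bound: "\<And>v. v \<noteq> [] \<Longrightarrow> p (w @ v) \<omega> \<Longrightarrow> \<mu> (w @ v) \<le> b"
  shows "0 < Msamp K \<alpha> \<beta> \<nu> p \<omega> w \<and> Msamp K \<alpha> \<beta> \<nu> p \<omega> w \<le> b"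
proof -
  define A where "A = {\<mu> (w @ v) | v. v \<noteq> [] \<and> p (w @ v) \<omega>}"
  have "\<mu> (w @ v) \<in> A" using assms(1,2) by (auto simp: A_def)
  moreover have "bdd_above A" using bound by (auto simp: A_def intro!: bdd_aboveI[of _ b])
  ultimately have "\<mu> (w @ v) \<le> Sup A" by (rule cSup_upper)
  moreover have "Sup A \<le> b" using \<open>\<mu> (w @ v) \<in> A\<close> bound by (intro cSup_least) (auto simp: A_def)
  moreover have "0 < \<mu> (w @ v)" using assms(1) by (simp add: gcap_pos)
  ultimately show ?thesis by (simp add: Msamp_def A_def)
qed

lemma eventually_log_Mtilde_ge:
  fixes H :: real
  assumes extension: "\<forall>w. \<exists>v. v \<noteq> [] \<and> p (w @ v) \<omega>"
    and small: "\<forall>\<^sub>F j in sequentially. \<forall>u v. length u = j \<longrightarrow> v \<noteq> [] \<longrightarrow> p (u @ v) \<omega> \<longrightarrow>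
      \<mu> (u @ v) \<le> 2 powr (- H * j)"
  shows "\<forall>\<^sub>F j in sequentially. \<forall>w. length w = j \<longrightarrow> H \<le> log 2 (Mtilde K \<alpha> \<beta> \<nu> p \<omega> w) / - real j"
  using small eventually_ge_at_top[of 1]
proof eventually_elim
  case (elim j)
  show ?case
  proof (intro allI impI)
    fix w :: "'d letter list" assume w: "length w = j"
    have "0 < Mtilde K \<alpha> \<beta> \<nu> p \<omega> w \<and> Mtilde K \<alpha> \<beta> \<nu> p \<omega> w \<le> 2 powr (- H * j)"
    proof (rule Mtilde_bounds)
      fix u :: "'d letter list" assume "length u = length w"
      moreover obtain v where "v \<noteq> []" "p (u @ v) \<omega>" using extension by blast
      ultimately show "0 < Msamp K \<alpha> \<beta> \<nu> p \<omega> u \<and> Msamp K \<alpha> \<beta> \<nu> p \<omega> u \<le> 2 powr (- H * j)"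
        using elim(1) w by (intro Msamp_bounds) auto
    qed
    then have "log 2 (Mtilde K \<alpha> \<beta> \<nu> p \<omega> w) \<le> log 2 (2 powr (- H * j))"
      by (intro log_mono) auto
    then have "log 2 (Mtilde K \<alpha> \<beta> \<nu> p \<omega> w) \<le> - H * j" by simp
    then show "H \<le> log 2 (Mtilde K \<alpha> \<beta> \<nu> p \<omega> w) / - real j"
      using elim(2) by (simp add: field_simps)
  qed
qed

lemma AE_eventually_extensions_le:
  fixes \<Omega> :: "'a measure" and \<eta> H :: real and p :: "'d letter list \<Rightarrow> 'a \<Rightarrow> bool"
  assumes "sampling_process \<Omega> \<eta> p" and H: "H < H_l K \<alpha> \<beta> \<nu> \<eta>"
  shows "AE \<omega> in \<Omega>. \<forall>\<^sub>F j in sequentially. \<forall>u v. length u = j \<longrightarrow> v \<noteq> [] \<longrightarrow> p (u @ v) \<omega> \<longrightarrow>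
    \<mu> (u @ v) \<le> 2 powr (- H * j)"
proof -
  interpret sampling_process \<Omega> \<eta> p by fact
  show ?thesis
  proof (cases "0 \<le> H")
    case True
    obtain q where q: "0 \<le> q" "q * H - tau K \<alpha> \<beta> \<nu> q < CARD('d) * (1 - \<eta>)"
      using tau_gap_below_H_l[OF less_imp_le[OF \<eta>_pos] True H] by blast
    have "(\<lambda>n. - log 2 (\<Sum>u\<in>words n. \<mu> u powr q) / n) \<longlonglongrightarrow> tau K \<alpha> \<beta> \<nu> q"
      using tau_LIMSEQ[of q] by (simp add: partition_sum_def)
    then have "AE \<omega> in \<Omega>. \<forall>\<^sub>F n in sequentially.
        \<forall>u\<in>words n. u \<noteq> [] \<longrightarrow> p u \<omega> \<longrightarrow> \<mu> u \<le> 2 powr (- H * n)"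
      using q gcap_pos by (intro AE_eventually_sampled_le) auto
    then show ?thesis
      by eventually_elim (rule eventually_extensions_le[OF _ True])
  next
    case False
    then have "\<forall>\<^sub>F j in sequentially. K \<le> 2 powr (- H * j)"
      by (intro eventually_le_powr_neg_mult) simp
    then show ?thesis
      by (intro AE_I2) (auto elim!: eventually_mono intro: order_trans[OF gcap_le_K])
  qed
qed

lemma AE_eventually_log_Mtilde_ge:
  fixes \<Omega> :: "'a measure" and \<eta> H :: real and p :: "'d letter list \<Rightarrow> 'a \<Rightarrow> bool"
  assumes "sampling_process \<Omega> \<eta> p" and "H < H_l K \<alpha> \<beta> \<nu> \<eta>"
  shows "AE \<omega> in \<Omega>. \<forall>\<^sub>F j in sequentially.
    \<forall>w. length w = j \<longrightarrow> H \<le> log 2 (Mtilde K \<alpha> \<beta> \<nu> p \<omega> w) / - real j"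
  using sampling_process.AE_sampled_extension[OF assms(1)] AE_eventually_extensions_le[OF assms]
  by eventually_elim (rule eventually_log_Mtilde_ge)

lemma AE_liminf_log_Mtilde_ge:
  fixes \<Omega> :: "'a measure" and \<eta> :: real and p :: "'d letter list \<Rightarrow> 'a \<Rightarrow> bool"
  assumes "sampling_process \<Omega> \<eta> p"
  shows "AE \<omega> in \<Omega>. \<forall>w. (\<forall>j. length (w j) = j) \<longrightarrow>
    ereal (H_l K \<alpha> \<beta> \<nu> \<eta>) \<le> liminf (\<lambda>j. ereal (log 2 (Mtilde K \<alpha> \<beta> \<nu> p \<omega> (w j)) / - real j))"
proof -
  have "AE \<omega> in \<Omega>. \<forall>k::nat. \<forall>\<^sub>F j in sequentially. \<forall>w. length w = j \<longrightarrow>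
      H_l K \<alpha> \<beta> \<nu> \<eta> - 1 / Suc k \<le> log 2 (Mtilde K \<alpha> \<beta> \<nu> p \<omega> w) / - real j"
    unfolding AE_all_countable by (intro allI AE_eventually_log_Mtilde_ge[OF assms]) simp
  then show ?thesis
  proof (rule eventually_mono, intro allI impI ereal_le_liminf_of_eventually)
    fix \<omega> k and w :: "nat \<Rightarrow> 'd letter list"
    assume bound: "\<forall>k::nat. \<forall>\<^sub>F j in sequentially. \<forall>w. length w = j \<longrightarrow>
        H_l K \<alpha> \<beta> \<nu> \<eta> - 1 / Suc k \<le> log 2 (Mtilde K \<alpha> \<beta> \<nu> p \<omega> w) / - real j"
      and "\<forall>j. length (w j) = j"
    from bound[rule_format, of k]
    show "\<forall>\<^sub>F j in sequentially. H_l K \<alpha> \<beta> \<nu> \<eta> - 1 / Suc k \<le> log 2 (Mtilde K \<alpha> \<beta> \<nu> p \<omega> (w j)) / - real j"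
      by (rule eventually_mono) (simp add: \<open>\<forall>j. length (w j) = j\<close>)
  qed
qed

end

theorem lemma4:
  fixes \<psi> :: "'d::finite seq \<Rightarrow> real" and \<nu> :: "'d seq measure"
    and K \<alpha> \<beta> \<eta> :: real and \<Omega> :: "'a measure" and p :: "'d letter list \<Rightarrow> 'a \<Rightarrow> bool"
  assumes "holder_potential \<psi>" and "gibbs_measure \<psi> \<nu>"
    and "K > 0" and "\<alpha> > 0" and "\<beta> \<ge> 0"
    and "\<not> cohomologous_to_constant \<psi>"
    and "0 < \<eta>" and "\<eta> < 1"
    and "sampling \<Omega> \<eta> p"
  shows "AE \<omega> in \<Omega>. \<forall>x::real^'d. (\<forall>i. 0 \<le> x $ i \<and> x $ i \<le> 1) \<longrightarrow>
           liminf (\<lambda>j. ereal (log 2 (Mtilde K \<alpha> \<beta> \<nu> p \<omega> (xprefix x j)) / - real j))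
             \<ge> ereal (H_l K \<alpha> \<beta> \<nu> \<eta>)"
proof -
  interpret gibbs_capacity \<psi> \<nu> K \<alpha> \<beta>
    using assms by unfold_locales auto
  have "sampling_process \<Omega> \<eta> p"
    using assms by unfold_locales
  then have "AE \<omega> in \<Omega>. \<forall>w. (\<forall>j. length (w j) = j) \<longrightarrow>
      ereal (H_l K \<alpha> \<beta> \<nu> \<eta>) \<le> liminf (\<lambda>j. ereal (log 2 (Mtilde K \<alpha> \<beta> \<nu> p \<omega> (w j)) / - real j))"
    by (rule AE_liminf_log_Mtilde_ge)
  then show ?thesis
  proof (rule eventually_mono, intro allI impI)
    fix \<omega> and x :: "real^'d"
    assume "\<forall>w. (\<forall>j. length (w j) = j) \<longrightarrow>
      ereal (H_l K \<alpha> \<beta> \<nu> \<eta>) \<le> liminf (\<lambda>j. ereal (log 2 (Mtilde K \<alpha> \<beta> \<nu> p \<omega> (w j)) / - real j))"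
    then show "liminf (\<lambda>j. ereal (log 2 (Mtilde K \<alpha> \<beta> \<nu> p \<omega> (xprefix x j)) / - real j))
        \<ge> ereal (H_l K \<alpha> \<beta> \<nu> \<eta>)"
      by (rule allE[where x = "xprefix x"]) (simp add: xprefix_def)
  qed
qed

end
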